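(* Let $\Phi=\{\varphi_i\}_{i\in\Lambda}$ be a similarity IFS in $\mathbb{R}^d$ with attractor $K$. The following are equivalent: (1) $K$ is not contained in an affine hyperplane; (2) there exists a section $\Pi\subset\Lambda^*$ such that the IFS $\{\varphi_i\}_{i\in\Pi}$ is diffuse; (3) $K$ is hyperplane diffuse.
   Context: A similarity IFS is a finite family of contracting similarities of $\mathbb{R}^d$; the attractor $K$ is the nonempty compact set with $K=\bigcup_i\varphi_iK$; for $i=i_1\dots i_n\in\Lambda^*$, $\varphi_i=\varphi_{i_1}\circ\cdots\circ\varphi_{i_n}$. A section is a finite set $\Pi\subset\Lambda^*$ such that the cylinders $[i]=\{j\in\Lambda^{\mathbb{N}}: i\text{ is a prefix of }j\}$, $i\in\Pi$, are pairwise disjoint with union $\Lambda^{\mathbb{N}}$. An IFS $\{\varphi_i\}_{i\in A}$ is diffuse if there is $c>0$ such that for every affine hyperplane $\mathcal{L}$ some $i\in A$ has $\varphi_iK\cap\mathcal{L}^{(c)}=\emptyset$ ($\mathcal{L}^{(c)}$ the open $c$-neighborhood). A closed set $E$ is hyperplane diffuse if there are $\beta,\xi_0>0$ such that for all $\xi\in(0,\xi_0)$, $x\in E$ and affine hyperplanes $\mathcal{L}$, $E\cap B_\xi(x)\setminus\mathcal{L}^{(\beta\xi)}\neq\emptyset$. *)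

theory Defs
  imports "HOL-Analysis.Analysis"
begin

definition contracting_similarity :: "('a::euclidean_space \<Rightarrow> 'a) \<Rightarrow> bool" where
  "contracting_similarity f \<longleftrightarrow>
     (\<exists>r. 0 < r \<and> r < 1 \<and> (\<forall>x y. dist (f x) (f y) = r * dist x y))"

definition similarity_IFS :: "'i set \<Rightarrow> ('i \<Rightarrow> 'a::euclidean_space \<Rightarrow> 'a) \<Rightarrow> bool" where
  "similarity_IFS Lam phi \<longleftrightarrow> finite Lam \<and> Lam \<noteq> {} \<and> (\<forall>i\<in>Lam. contracting_similarity (phi i))"

definition is_attractor :: "'i set \<Rightarrow> ('i \<Rightarrow> 'a::euclidean_space \<Rightarrow> 'a) \<Rightarrow> 'a set \<Rightarrow> bool" where
  "is_attractor Lam phi K \<longleftrightarrow> K \<noteq> {} \<and> compact K \<and> K = (\<Union>i\<in>Lam. phi i ` K)"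

definition word_map :: "('i \<Rightarrow> 'a \<Rightarrow> 'a) \<Rightarrow> 'i list \<Rightarrow> 'a \<Rightarrow> 'a" where
  "word_map phi w = foldr (\<lambda>j f. phi j \<circ> f) w id"

definition infwords :: "'i set \<Rightarrow> (nat \<Rightarrow> 'i) set" where
  "infwords Lam = {\<omega>. \<forall>n. \<omega> n \<in> Lam}"

definition cylinder :: "'i set \<Rightarrow> 'i list \<Rightarrow> (nat \<Rightarrow> 'i) set" where
  "cylinder Lam w = {\<omega> \<in> infwords Lam. \<forall>k<length w. \<omega> k = w ! k}"

definition is_section :: "'i set \<Rightarrow> 'i list set \<Rightarrow> bool" where
  "is_section Lam Sec \<longleftrightarrow> finite Sec \<and> Sec \<subseteq> lists Lam \<and>
     (\<forall>v\<in>Sec. \<forall>w\<in>Sec. v \<noteq> w \<longrightarrow> cylinder Lam v \<inter> cylinder Lam w = {}) \<and>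
     (\<Union>w\<in>Sec. cylinder Lam w) = infwords Lam"

definition affine_hyperplane :: "'a::euclidean_space set \<Rightarrow> bool" where
  "affine_hyperplane L \<longleftrightarrow> (\<exists>a b. a \<noteq> 0 \<and> L = {x. a \<bullet> x = b})"

definition open_nbhd :: "'a::metric_space set \<Rightarrow> real \<Rightarrow> 'a set" where
  "open_nbhd L c = {x. \<exists>y\<in>L. dist x y < c}"

definition diffuse_IFS :: "('i \<Rightarrow> 'a::euclidean_space \<Rightarrow> 'a) \<Rightarrow> 'i list set \<Rightarrow> 'a set \<Rightarrow> bool" where
  "diffuse_IFS phi A K \<longleftrightarrow>
     (\<exists>c>0. \<forall>L. affine_hyperplane L \<longrightarrow> (\<exists>w\<in>A. word_map phi w ` K \<inter> open_nbhd L c = {}))"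

definition hyperplane_diffuse :: "'a::euclidean_space set \<Rightarrow> bool" where
  "hyperplane_diffuse E \<longleftrightarrow> closed E \<and>
     (\<exists>\<beta>>0. \<exists>\<xi>0>0. \<forall>\<xi>. 0 < \<xi> \<and> \<xi> < \<xi>0 \<longrightarrow> (\<forall>x\<in>E. \<forall>L. affine_hyperplane L \<longrightarrow>
        E \<inter> ball x \<xi> - open_nbhd L (\<beta> * \<xi>) \<noteq> {}))"

end

theory Submission
  imports Defs
begin

(*
  (1) ==> (2): by compactness of the space of unit normals and offsets, a compact set lying in
  no hyperplane has, for every hyperplane, a point at distance at least some uniform delta > 0
  from it. For n large all pieces phi_w K with |w| = n have diameter below delta/2, so the piece
  containing such a far point misses the delta/2-neighbourhood: the words of length n form a
  diffuse section.

  (2) ==> (3): given x in K and a scale xi, pick a word u with x in phi_u K whose contraction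
  ratio is comparable to xi. Pulling the hyperplane back by the similarity phi_u and using
  diffuseness of the section yields a piece phi_u (phi_w K) inside the xi-ball around x that
  avoids a neighbourhood of the hyperplane of width proportional to xi.

  (3) ==> (1): if K lay in a hyperplane, no point of K could avoid its neighbourhoods.
*)

lemma open_nbhd_mono: "c \<le> c' \<Longrightarrow> open_nbhd L c \<subseteq> open_nbhd L c'"
  unfolding open_nbhd_def by force

lemma open_nbhd_dist_add:
  assumes "y \<in> open_nbhd L c" and "dist x y < r"
  shows "x \<in> open_nbhd L (c + r)"
proof -
  obtain z where "z \<in> L" and "dist y z < c" using assms(1) unfolding open_nbhd_def by blast
  moreover have "dist x z \<le> dist x y + dist y z" by (rule dist_triangle)
  ultimately show ?thesis using assms(2) unfolding open_nbhd_def by force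
qed

lemma affine_hyperplaneI: "a \<noteq> 0 \<Longrightarrow> affine_hyperplane {x. a \<bullet> x = b}"
  unfolding affine_hyperplane_def by blast

lemma affine_hyperplane_unit_normal:
  assumes "affine_hyperplane L"
  obtains a b where "norm a = 1" and "L = {x. a \<bullet> x = b}"
proof -
  obtain a b where a: "a \<noteq> 0" and L: "L = {x. a \<bullet> x = b}"
    using assms unfolding affine_hyperplane_def by blast
  have "L = {x. (a /\<^sub>R norm a) \<bullet> x = b / norm a}"
    using a by (auto simp: L field_simps)
  with a show thesis by (intro that[of "a /\<^sub>R norm a"]) auto
qed

lemma mem_open_nbhd_hyperplane:
  fixes a :: "'a::euclidean_space"
  assumes a: "norm a = 1"
  shows "x \<in> open_nbhd {y. a \<bullet> y = b} c \<longleftrightarrow> \<bar>a \<bullet> x - b\<bar> < c"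
proof
  assume "x \<in> open_nbhd {y. a \<bullet> y = b} c"
  then obtain y where y: "a \<bullet> y = b" and "dist x y < c"
    unfolding open_nbhd_def by blast
  moreover have "\<bar>a \<bullet> (x - y)\<bar> \<le> dist x y"
    using Cauchy_Schwarz_ineq2[of a "x - y"] a by (simp add: dist_norm)
  ultimately show "\<bar>a \<bullet> x - b\<bar> < c" by (simp add: inner_diff_right)
next
  assume less: "\<bar>a \<bullet> x - b\<bar> < c"
  define y where "y = x - (a \<bullet> x - b) *\<^sub>R a"
  have "a \<bullet> y = b" using a by (simp add: y_def inner_diff_right dot_square_norm)
  moreover have "dist x y < c" using a less by (simp add: y_def dist_norm)
  ultimately show "x \<in> open_nbhd {y. a \<bullet> y = b} c" unfolding open_nbhd_def by blast
qed

lemma slab_limit_subset_hyperplane: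
  fixes a :: "nat \<Rightarrow> 'a::real_inner"
  assumes lim: "(\<lambda>n. (a n, b n)) \<longlonglongrightarrow> (a0, b0)" and "e \<longlonglongrightarrow> 0"
    and thin: "\<And>n x. x \<in> K \<Longrightarrow> \<bar>a n \<bullet> x - b n\<bar> \<le> e n"
  shows "K \<subseteq> {x. a0 \<bullet> x = b0}"
proof
  fix x assume "x \<in> K"
  have "(\<lambda>n. \<bar>a n \<bullet> x - b n\<bar>) \<longlonglongrightarrow> \<bar>a0 \<bullet> x - b0\<bar>"
    using tendsto_fst[OF lim] tendsto_snd[OF lim]
    by (auto intro!: tendsto_rabs tendsto_diff tendsto_inner tendsto_const)
  then have "\<bar>a0 \<bullet> x - b0\<bar> \<le> 0"
    using LIMSEQ_le[OF _ \<open>e \<longlonglongrightarrow> 0\<close>] thin[OF \<open>x \<in> K\<close>] by blast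
  then show "x \<in> {x. a0 \<bullet> x = b0}" by simp
qed

lemma subset_open_nbhd_hyperplaneE:
  fixes K :: "'a::euclidean_space set"
  assumes "affine_hyperplane L" and "K \<subseteq> open_nbhd L \<epsilon>"
  obtains a b where "norm a = 1" and "\<forall>x\<in>K. \<bar>a \<bullet> x - b\<bar> < \<epsilon>"
proof -
  from assms(1) obtain a b where a: "norm a = 1" and L: "L = {x. a \<bullet> x = b}"
    by (rule affine_hyperplane_unit_normal)
  show thesis
  proof (rule that[OF a], rule ballI)
    fix x assume "x \<in> K"
    with assms(2) have "x \<in> open_nbhd {x. a \<bullet> x = b} \<epsilon>" unfolding L by blast
    then show "\<bar>a \<bullet> x - b\<bar> < \<epsilon>" by (simp add: mem_open_nbhd_hyperplane[OF a])
  qed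
qed

lemma compact_in_hyperplane_if_thin:
  fixes K :: "'a::euclidean_space set"
  assumes K: "compact K" "K \<noteq> {}"
    and thin: "\<forall>n. \<exists>L. affine_hyperplane L \<and> K \<subseteq> open_nbhd L (inverse (Suc n))"
  shows "\<exists>L. affine_hyperplane L \<and> K \<subseteq> L"
proof -
  have "\<exists>a b. norm a = 1 \<and> (\<forall>x\<in>K. \<bar>a \<bullet> x - b\<bar> < inverse (Suc n))" for n
  proof -
    obtain L where "affine_hyperplane L" and "K \<subseteq> open_nbhd L (inverse (Suc n))"
      using thin by blast
    then obtain a b where "norm a = 1" and "\<forall>x\<in>K. \<bar>a \<bullet> x - b\<bar> < inverse (Suc n)"
      by (rule subset_open_nbhd_hyperplaneE)
    then show ?thesis by blast
  qed
  then obtain a b where unit: "\<And>n. norm (a n) = 1"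
    and close: "\<And>n x. x \<in> K \<Longrightarrow> \<bar>a n \<bullet> x - b n\<bar> < inverse (Suc n)"
    by metis
  obtain M where M: "\<And>x. x \<in> K \<Longrightarrow> norm x \<le> M"
    using compact_imp_bounded[OF K(1)] unfolding bounded_iff by blast
  obtain x0 where x0: "x0 \<in> K" using K(2) by blast
  define S where "S = sphere (0::'a) 1 \<times> cball (0::real) (M + 1)"
  have "(a n, b n) \<in> S" for n
  proof -
    have "\<bar>a n \<bullet> x0\<bar> \<le> M"
      using Cauchy_Schwarz_ineq2[of "a n" x0] unit[of n] M[OF x0] by simp
    moreover have "\<bar>a n \<bullet> x0 - b n\<bar> < 1"
      using close[OF x0, of n] by (simp add: inverse_le_1_iff order.strict_trans2)
    ultimately show ?thesis using unit[of n] unfolding S_def by auto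
  qed
  moreover have "compact S" unfolding S_def by (intro compact_Times compact_sphere compact_cball)
  ultimately obtain l r where "l \<in> S" and r: "strict_mono r"
    and lim: "((\<lambda>n. (a n, b n)) \<circ> r) \<longlonglongrightarrow> l"
    by (meson compact_imp_seq_compact seq_compactE)
  moreover obtain a0 b0 where l: "l = (a0, b0)" by fastforce
  ultimately have "a0 \<noteq> 0" unfolding S_def by auto
  have "K \<subseteq> {x. a0 \<bullet> x = b0}"
  proof (rule slab_limit_subset_hyperplane[of "a \<circ> r" "b \<circ> r" a0 b0 "\<lambda>n. inverse (Suc (r n))"])
    show "(\<lambda>n. ((a \<circ> r) n, (b \<circ> r) n)) \<longlonglongrightarrow> (a0, b0)"
      using lim l by (simp add: o_def)
    show "(\<lambda>n. inverse (real (Suc (r n)))) \<longlonglongrightarrow> 0"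
      using LIMSEQ_subseq_LIMSEQ[OF LIMSEQ_inverse_real_of_nat r] by (simp add: o_def)
    show "\<bar>(a \<circ> r) n \<bullet> x - (b \<circ> r) n\<bar> \<le> inverse (Suc (r n))" if "x \<in> K" for n x
      using close[OF that, of "r n"] by simp
  qed
  then show ?thesis using affine_hyperplaneI[OF \<open>a0 \<noteq> 0\<close>] by blast
qed

lemma compact_uniformly_off_hyperplanes:
  fixes K :: "'a::euclidean_space set"
  assumes "compact K" "K \<noteq> {}" and "\<nexists>L. affine_hyperplane L \<and> K \<subseteq> L"
  obtains \<delta> where "\<delta> > 0" and "\<And>L. affine_hyperplane L \<Longrightarrow> \<not> K \<subseteq> open_nbhd L \<delta>"
proof -
  obtain n where "\<forall>L. affine_hyperplane L \<longrightarrow> \<not> K \<subseteq> open_nbhd L (inverse (Suc n))"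
    using compact_in_hyperplane_if_thin[OF assms(1,2)] assms(3) by blast
  then show thesis by (intro that[of "inverse (Suc n)"]) auto
qed

lemma hyperplane_diffuse_not_in_hyperplane:
  assumes "hyperplane_diffuse E" and "E \<noteq> {}" and "affine_hyperplane L"
  shows "\<not> E \<subseteq> L"
proof
  assume "E \<subseteq> L"
  obtain \<beta> \<xi>0 where "\<beta> > 0" "\<xi>0 > 0" and diffuse: "\<forall>\<xi>. 0 < \<xi> \<and> \<xi> < \<xi>0 \<longrightarrow>
      (\<forall>x\<in>E. \<forall>L. affine_hyperplane L \<longrightarrow> E \<inter> ball x \<xi> - open_nbhd L (\<beta> * \<xi>) \<noteq> {})"
    using assms(1) unfolding hyperplane_diffuse_def by blast
  obtain x where "x \<in> E" using assms(2) by blast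
  then have "E \<inter> ball x (\<xi>0 / 2) - open_nbhd L (\<beta> * (\<xi>0 / 2)) \<noteq> {}"
    using diffuse[rule_format, of "\<xi>0 / 2" x L] \<open>\<xi>0 > 0\<close> assms(3) by simp
  then obtain y where "y \<in> E" "y \<notin> open_nbhd L (\<beta> * (\<xi>0 / 2))"
    by blast
  moreover have "y \<in> open_nbhd L (\<beta> * (\<xi>0 / 2))"
    using \<open>y \<in> E\<close> \<open>E \<subseteq> L\<close> \<open>\<beta> > 0\<close> \<open>\<xi>0 > 0\<close> unfolding open_nbhd_def by force
  ultimately show False by blast
qed

lemma similarity_orthogonal_decomposition:
  fixes f :: "'a::euclidean_space \<Rightarrow> 'a"
  assumes s: "s > 0" and f: "\<And>x y. dist (f x) (f y) = s * dist x y"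
  obtains g c where "orthogonal_transformation g" and "\<And>x. f x = s *\<^sub>R g x + c"
proof
  define g where "g x = (1 / s) *\<^sub>R (f x - f 0)" for x
  have "dist (g x) (g y) = dist x y" for x y
    using s f[of x y] by (simp add: g_def dist_norm flip: scaleR_diff_right)
  then show "orthogonal_transformation g"
    unfolding orthogonal_transformation_isometry by (simp add: g_def)
  show "f x = s *\<^sub>R g x + f 0" for x
    using s by (simp add: g_def)
qed

lemma similarity_surj:
  fixes f :: "'a::euclidean_space \<Rightarrow> 'a"
  assumes s: "s > 0" and f: "\<And>x y. dist (f x) (f y) = s * dist x y"
  shows "surj f"
proof -
  obtain g c where g: "orthogonal_transformation g" and fg: "\<And>x. f x = s *\<^sub>R g x + c"
    using similarity_orthogonal_decomposition[OF s f] by blast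
  have "y = f (inv g ((1 / s) *\<^sub>R (y - c)))" for y
    using s by (simp add: fg surj_f_inv_f[OF orthogonal_transformation_surj[OF g]])
  then show ?thesis by blast
qed

lemma similarity_vimage_affine_hyperplane:
  fixes f :: "'a::euclidean_space \<Rightarrow> 'a"
  assumes s: "s > 0" and f: "\<And>x y. dist (f x) (f y) = s * dist x y"
    and "affine_hyperplane L"
  shows "affine_hyperplane (f -` L)"
proof -
  obtain g c where g: "orthogonal_transformation g" and fg: "\<And>x. f x = s *\<^sub>R g x + c"
    using similarity_orthogonal_decomposition[OF s f] by blast
  obtain a b where "a \<noteq> 0" and L: "L = {y. a \<bullet> y = b}"
    using assms(3) unfolding affine_hyperplane_def by blast
  obtain a' where a': "a = g a'"
    using orthogonal_transformation_surj[OF g] by blast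
  have "g 0 = 0"
    using g by (simp add: orthogonal_transformation_linear linear_0)
  with a' \<open>a \<noteq> 0\<close> s have "s *\<^sub>R a' \<noteq> 0" by auto
  moreover have "f -` L = {x. (s *\<^sub>R a') \<bullet> x = b - a \<bullet> c}"
  proof -
    have "a \<bullet> g x = a' \<bullet> x" for x
      using g unfolding a' orthogonal_transformation_def by blast
    then show ?thesis by (auto simp: L fg inner_add_right)
  qed
  ultimately show ?thesis by (metis affine_hyperplaneI)
qed

lemma similarity_vimage_open_nbhd:
  fixes f :: "'a::metric_space \<Rightarrow> 'b::metric_space"
  assumes s: "s > 0" and f: "\<And>x y. dist (f x) (f y) = s * dist x y" and "surj f"
  shows "f -` open_nbhd L (s * c) = open_nbhd (f -` L) c"
proof (intro set_eqI iffI)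
  fix x assume "x \<in> f -` open_nbhd L (s * c)"
  then obtain z where "z \<in> L" and "dist (f x) z < s * c" unfolding open_nbhd_def by auto
  moreover obtain y where "z = f y" using \<open>surj f\<close> by blast
  ultimately have "y \<in> f -` L" and "dist x y < c" using s f[of x y] by auto
  then show "x \<in> open_nbhd (f -` L) c" unfolding open_nbhd_def by blast
next
  fix x assume "x \<in> open_nbhd (f -` L) c"
  then obtain y where "f y \<in> L" and "dist x y < c" unfolding open_nbhd_def by auto
  then have "dist (f x) (f y) < s * c" using s f[of x y] by simp
  with \<open>f y \<in> L\<close> show "x \<in> f -` open_nbhd L (s * c)" unfolding open_nbhd_def by auto
qed

lemma word_map_Nil [simp]: "word_map phi [] = id"
  by (simp add: word_map_def)

lemma word_map_Cons [simp]: "word_map phi (i # w) = phi i \<circ> word_map phi w"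
  by (simp add: word_map_def)

lemma is_section_words_of_length:
  assumes "finite Lam"
  shows "is_section Lam {w \<in> lists Lam. length w = n}"
  unfolding is_section_def
proof (intro conjI ballI impI)
  have "{w \<in> lists Lam. length w = n} = {w. set w \<subseteq> Lam \<and> length w = n}" by auto
  then show "finite {w \<in> lists Lam. length w = n}"
    using finite_lists_length_eq[OF assms] by simp
next
  fix v w assume "v \<in> {w \<in> lists Lam. length w = n}" "w \<in> {w \<in> lists Lam. length w = n}" "v \<noteq> w"
  then obtain k where "k < n" and "v ! k \<noteq> w ! k" using nth_equalityI[of v w] by auto
  then show "cylinder Lam v \<inter> cylinder Lam w = {}"
    using \<open>v \<in> _\<close> \<open>w \<in> _\<close> unfolding cylinder_def by auto
next
  have "\<omega> \<in> cylinder Lam (map \<omega> [0..<n])" if "\<omega> \<in> infwords Lam" for \<omega>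
    using that by (simp add: cylinder_def)
  moreover have "map \<omega> [0..<n] \<in> lists Lam" if "\<omega> \<in> infwords Lam" for \<omega>
    using that by (auto simp: infwords_def)
  ultimately show "(\<Union>w\<in>{w \<in> lists Lam. length w = n}. cylinder Lam w) = infwords Lam"
    unfolding cylinder_def by fastforce
qed auto

locale similarity_ifs =
  fixes Lam :: "'i set" and phi :: "'i \<Rightarrow> 'a::euclidean_space \<Rightarrow> 'a"
  assumes similarity_IFS: "similarity_IFS Lam phi"
begin

lemma finite_alphabet: "finite Lam" and alphabet_nonempty: "Lam \<noteq> {}"
  using similarity_IFS unfolding similarity_IFS_def by auto

definition ratio :: "'i \<Rightarrow> real" where
  "ratio i = (SOME r. 0 < r \<and> r < 1 \<and> (\<forall>x y. dist (phi i x) (phi i y) = r * dist x y))"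

lemma
  assumes "i \<in> Lam"
  shows ratio_pos: "0 < ratio i" and ratio_less_1: "ratio i < 1"
    and dist_phi: "dist (phi i x) (phi i y) = ratio i * dist x y"
proof -
  have "\<exists>r. 0 < r \<and> r < 1 \<and> (\<forall>x y. dist (phi i x) (phi i y) = r * dist x y)"
    using similarity_IFS assms unfolding similarity_IFS_def contracting_similarity_def by blast
  from someI_ex[OF this] show "0 < ratio i" "ratio i < 1"
    "dist (phi i x) (phi i y) = ratio i * dist x y"
    unfolding ratio_def by blast+
qed

definition min_ratio :: real where "min_ratio = Min (ratio ` Lam)"

definition max_ratio :: real where "max_ratio = Max (ratio ` Lam)"

lemma min_ratio_pos: "0 < min_ratio"
  and min_ratio_le: "i \<in> Lam \<Longrightarrow> min_ratio \<le> ratio i"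
  using finite_alphabet alphabet_nonempty ratio_pos by (auto simp: min_ratio_def)

lemma max_ratio_less_1: "max_ratio < 1"
  and ratio_le_max_ratio: "i \<in> Lam \<Longrightarrow> ratio i \<le> max_ratio"
  using finite_alphabet alphabet_nonempty ratio_less_1 by (auto simp: max_ratio_def)

lemma max_ratio_pos: "0 < max_ratio"
  using alphabet_nonempty ratio_pos ratio_le_max_ratio by (meson ex_in_conv less_le_trans)

definition word_ratio :: "'i list \<Rightarrow> real" where
  "word_ratio w = prod_list (map ratio w)"

lemma word_ratio_Nil [simp]: "word_ratio [] = 1"
  and word_ratio_Cons [simp]: "word_ratio (i # w) = ratio i * word_ratio w"
  by (simp_all add: word_ratio_def)

lemma dist_word_map:
  "w \<in> lists Lam \<Longrightarrow> dist (word_map phi w x) (word_map phi w y) = word_ratio w * dist x y"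
  by (induction w arbitrary: x y) (auto simp: dist_phi)

lemma word_ratio_pos: "w \<in> lists Lam \<Longrightarrow> 0 < word_ratio w"
  by (induction w) (auto simp: ratio_pos)

lemma word_ratio_le_power: "w \<in> lists Lam \<Longrightarrow> word_ratio w \<le> max_ratio ^ length w"
proof (induction w)
  case (Cons i w)
  then have "ratio i * word_ratio w \<le> max_ratio * max_ratio ^ length w"
    by (intro mult_mono) (auto simp: ratio_le_max_ratio less_imp_le[OF word_ratio_pos] less_imp_le[OF max_ratio_pos])
  then show ?case by simp
qed simp

lemma image_word_map_subset_ball:
  assumes D: "\<And>x y. x \<in> E \<Longrightarrow> y \<in> E \<Longrightarrow> dist x y < D" and w: "w \<in> lists Lam" and "z \<in> E"
  shows "word_map phi w ` E \<subseteq> ball (word_map phi w z) (word_ratio w * D)"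
proof
  fix y assume "y \<in> word_map phi w ` E"
  then obtain v where "v \<in> E" and y: "y = word_map phi w v" by blast
  have "dist (word_map phi w z) y = word_ratio w * dist z v"
    unfolding y by (rule dist_word_map[OF w])
  also have "\<dots> < word_ratio w * D"
    using D[OF \<open>z \<in> E\<close> \<open>v \<in> E\<close>] word_ratio_pos[OF w] by (rule mult_strict_left_mono)
  finally show "y \<in> ball (word_map phi w z) (word_ratio w * D)" by simp
qed

lemma rescaled_piece_avoids_nbhd:
  assumes diffuse: "\<And>L. affine_hyperplane L \<Longrightarrow> \<exists>w\<in>Sec. word_map phi w ` E \<inter> open_nbhd L c = {}"
    and u: "u \<in> lists Lam" and L: "affine_hyperplane L"
  obtains w where "w \<in> Sec"
    and "word_map phi u ` word_map phi w ` E \<inter> open_nbhd L (word_ratio u * c) = {}"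
proof -
  define f where "f = word_map phi u"
  have "dist (f x) (f y) = word_ratio u * dist x y" for x y
    unfolding f_def by (rule dist_word_map[OF u])
  note similarity = word_ratio_pos[OF u] this
  obtain w where "w \<in> Sec" and "word_map phi w ` E \<inter> open_nbhd (f -` L) c = {}"
    using diffuse[OF similarity_vimage_affine_hyperplane[OF similarity L]] by blast
  then have "word_map phi w ` E \<inter> f -` open_nbhd L (word_ratio u * c) = {}"
    by (simp add: similarity_vimage_open_nbhd[OF similarity similarity_surj[OF similarity]])
  then have "f ` word_map phi w ` E \<inter> open_nbhd L (word_ratio u * c) = {}" by blast
  with \<open>w \<in> Sec\<close> show thesis unfolding f_def by (rule that)
qed

end

locale similarity_ifs_attractor = similarity_ifs Lam phi
    for Lam :: "'i set" and phi :: "'i \<Rightarrow> 'a::euclidean_space \<Rightarrow> 'a" +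
  fixes K :: "'a set"
  assumes attractor: "is_attractor Lam phi K"
begin

lemma attractor_nonempty: "K \<noteq> {}" and compact_attractor: "compact K"
  and attractor_eq: "K = (\<Union>i\<in>Lam. phi i ` K)"
  using attractor unfolding is_attractor_def by auto

lemma image_phi_attractor_subset: "i \<in> Lam \<Longrightarrow> phi i ` K \<subseteq> K"
proof -
  assume "i \<in> Lam"
  then have "phi i ` K \<subseteq> (\<Union>i\<in>Lam. phi i ` K)" by blast
  then show ?thesis by (simp only: attractor_eq[symmetric])
qed

lemma attractor_cases:
  assumes "x \<in> K"
  obtains i y where "i \<in> Lam" and "y \<in> K" and "x = phi i y"
proof -
  have "x \<in> (\<Union>i\<in>Lam. phi i ` K)" using assms by (simp only: attractor_eq[symmetric])
  then show thesis using that by blast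
qed

lemma word_map_attractor_subset: "w \<in> lists Lam \<Longrightarrow> word_map phi w ` K \<subseteq> K"
proof (induction w)
  case (Cons i w)
  then have "phi i ` word_map phi w ` K \<subseteq> phi i ` K" by auto
  also have "\<dots> \<subseteq> K" using Cons.prems image_phi_attractor_subset by simp
  finally show ?case by (simp add: image_comp)
qed simp

lemma attractor_dist_less:
  obtains D where "D > 0" and "\<And>x y. x \<in> K \<Longrightarrow> y \<in> K \<Longrightarrow> dist x y < D"
proof
  have "bounded K" using compact_attractor by (rule compact_imp_bounded)
  then show "diameter K + 1 > 0" using diameter_ge_0 by fastforce
  show "dist x y < diameter K + 1" if "x \<in> K" "y \<in> K" for x y
    using diameter_bounded_bound[OF \<open>bounded K\<close> that] by simp
qed

lemma attractor_decomposition_of_length: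
  assumes "x \<in> K"
  obtains w z where "w \<in> lists Lam" "length w = n" "z \<in> K" "x = word_map phi w z"
  using assms
proof (induction n arbitrary: x thesis)
  case 0
  then show ?case by (metis list.size(3) lists.Nil word_map_Nil id_apply)
next
  case (Suc n)
  from \<open>x \<in> K\<close> obtain i y where "i \<in> Lam" "y \<in> K" "x = phi i y" by (rule attractor_cases)
  moreover obtain w z where "w \<in> lists Lam" "length w = n" "z \<in> K" "y = word_map phi w z"
    using Suc.IH \<open>y \<in> K\<close> by blast
  ultimately show ?case using Suc.prems(1)[of "i # w" z] by simp
qed

(* Greedy stopping: the first prefix of a coding of x whose ratio drops to at most t still has
   ratio at least min_ratio * t. *)
lemma attractor_decomposition_at_scale:
  assumes "max_ratio ^ n < t" and "t \<le> 1" and "x \<in> K"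
  obtains u z where "u \<in> lists Lam" "z \<in> K" "x = word_map phi u z"
    and "min_ratio * t \<le> word_ratio u" "word_ratio u \<le> t"
  using assms
proof (induction n arbitrary: t x thesis)
  case 0
  then show ?case by simp
next
  case (Suc n)
  from \<open>x \<in> K\<close> obtain i y where i: "i \<in> Lam" and "y \<in> K" and x: "x = phi i y"
    by (rule attractor_cases)
  show ?case
  proof (cases "ratio i \<le> t")
    case True
    have "min_ratio * t \<le> min_ratio"
      using \<open>t \<le> 1\<close> min_ratio_pos by (simp add: mult_left_le)
    also have "\<dots> \<le> ratio i" by (rule min_ratio_le[OF i])
    finally show ?thesis using True i \<open>y \<in> K\<close> x Suc.prems(1)[of "[i]" y] by simp
  next
    case False
    have "max_ratio ^ n * ratio i \<le> max_ratio ^ n * max_ratio"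
      using ratio_le_max_ratio[OF i] max_ratio_pos by (intro mult_left_mono) auto
    also have "\<dots> < t" using Suc.prems(2) by (simp add: mult.commute)
    finally have "max_ratio ^ n < t / ratio i" using ratio_pos[OF i] by (simp add: field_simps)
    moreover have "t / ratio i \<le> 1" using False ratio_pos[OF i] by simp
    ultimately obtain u z where u: "u \<in> lists Lam" "z \<in> K" "y = word_map phi u z"
      and "min_ratio * (t / ratio i) \<le> word_ratio u" "word_ratio u \<le> t / ratio i"
      using Suc.IH \<open>y \<in> K\<close> by blast
    then have "min_ratio * t \<le> word_ratio (i # u)" "word_ratio (i # u) \<le> t"
      using ratio_pos[OF i] by (auto simp: field_simps)
    then show ?thesis using Suc.prems(1)[of "i # u" z] u i x by simp
  qed
qed

lemma diffuse_section_if_not_flat: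
  assumes "\<nexists>L. affine_hyperplane L \<and> K \<subseteq> L"
  shows "\<exists>Sec. is_section Lam Sec \<and> diffuse_IFS phi Sec K"
proof -
  obtain \<delta> where "\<delta> > 0" and off: "\<And>L. affine_hyperplane L \<Longrightarrow> \<not> K \<subseteq> open_nbhd L \<delta>"
    using compact_uniformly_off_hyperplanes[OF compact_attractor attractor_nonempty assms] by blast
  obtain D where "D > 0" and D: "\<And>x y. x \<in> K \<Longrightarrow> y \<in> K \<Longrightarrow> dist x y < D"
    using attractor_dist_less by blast
  obtain n where n: "max_ratio ^ n < \<delta> / (2 * D)"
  proof (rule exE[OF real_arch_pow_inv[OF _ max_ratio_less_1]])
    show "0 < \<delta> / (2 * D)" using \<open>\<delta> > 0\<close> \<open>D > 0\<close> by simp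
  qed
  define Sec where "Sec = {w \<in> lists Lam. length w = n}"
  have "\<exists>w\<in>Sec. word_map phi w ` K \<inter> open_nbhd L (\<delta> / 2) = {}" if L: "affine_hyperplane L" for L
  proof -
    obtain x where "x \<in> K" and x_off: "x \<notin> open_nbhd L \<delta>" using off[OF L] by blast
    from \<open>x \<in> K\<close> obtain w z
      where w: "w \<in> lists Lam" "length w = n" and "z \<in> K" and x: "x = word_map phi w z"
      by (rule attractor_decomposition_of_length)
    have "word_ratio w * D \<le> max_ratio ^ n * D"
      using word_ratio_le_power[OF w(1)] w(2) \<open>D > 0\<close> by simp
    also have "\<dots> < \<delta> / 2" using n \<open>D > 0\<close> by (simp add: field_simps)
    finally have "ball x (word_ratio w * D) \<subseteq> ball x (\<delta> / 2)" by (intro subset_ball) simp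
    then have "word_map phi w ` K \<subseteq> ball x (\<delta> / 2)"
      using image_word_map_subset_ball[OF D w(1) \<open>z \<in> K\<close>, folded x] by blast
    moreover have "y \<notin> open_nbhd L (\<delta> / 2)" if "y \<in> ball x (\<delta> / 2)" for y
      using open_nbhd_dist_add[of y L "\<delta> / 2" x "\<delta> / 2"] that x_off by auto
    ultimately have "word_map phi w ` K \<inter> open_nbhd L (\<delta> / 2) = {}" by blast
    then show ?thesis using w unfolding Sec_def by blast
  qed
  then have "diffuse_IFS phi Sec K"
    unfolding diffuse_IFS_def using \<open>\<delta> > 0\<close> half_gt_zero by blast
  moreover have "is_section Lam Sec"
    unfolding Sec_def by (rule is_section_words_of_length[OF finite_alphabet])
  ultimately show ?thesis by blast
qed

lemma diffuse_section_point_off_nbhd: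
  assumes "Sec \<subseteq> lists Lam" and "c > 0"
    and diffuse: "\<And>L. affine_hyperplane L \<Longrightarrow> \<exists>w\<in>Sec. word_map phi w ` K \<inter> open_nbhd L c = {}"
    and D: "\<And>x y. x \<in> K \<Longrightarrow> y \<in> K \<Longrightarrow> dist x y < D"
    and r: "0 < r" "r \<le> D" and "x \<in> K" and L: "affine_hyperplane L"
  obtains y where "y \<in> K" and "dist x y < r" and "y \<notin> open_nbhd L (min_ratio * c / D * r)"
proof -
  have "D > 0" using D[OF \<open>x \<in> K\<close> \<open>x \<in> K\<close>] by simp
  obtain n where "max_ratio ^ n < r / D"
  proof (rule exE[OF real_arch_pow_inv[OF _ max_ratio_less_1]])
    show "0 < r / D" using r \<open>D > 0\<close> by simp
  qed
  moreover have "r / D \<le> 1" using r \<open>D > 0\<close> by simp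
  ultimately obtain u z where u: "u \<in> lists Lam" and "z \<in> K" and x: "x = word_map phi u z"
    and u_ratio: "min_ratio * (r / D) \<le> word_ratio u" "word_ratio u \<le> r / D"
    using \<open>x \<in> K\<close> by (rule attractor_decomposition_at_scale)
  obtain w where "w \<in> Sec"
    and avoid: "word_map phi u ` word_map phi w ` K \<inter> open_nbhd L (word_ratio u * c) = {}"
    using rescaled_piece_avoids_nbhd[OF diffuse u L] by blast
  obtain v where "v \<in> K" using attractor_nonempty by blast
  then have wv: "word_map phi w v \<in> K"
    using word_map_attractor_subset \<open>w \<in> Sec\<close> \<open>Sec \<subseteq> lists Lam\<close> by blast
  define y where "y = word_map phi u (word_map phi w v)"
  have "y \<in> K" using word_map_attractor_subset[OF u] wv unfolding y_def by blast
  moreover have "dist x y < r"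
  proof -
    have "word_ratio u * D \<le> r" using u_ratio(2) \<open>D > 0\<close> by (simp add: field_simps)
    then have "ball x (word_ratio u * D) \<subseteq> ball x r" by (rule subset_ball)
    then have "y \<in> ball x r"
      using image_word_map_subset_ball[OF D u \<open>z \<in> K\<close>, folded x] wv unfolding y_def by blast
    then show ?thesis by simp
  qed
  moreover have "y \<notin> open_nbhd L (min_ratio * c / D * r)"
  proof -
    have "min_ratio * c / D * r = min_ratio * (r / D) * c" by simp
    also have "\<dots> \<le> word_ratio u * c" using u_ratio(1) \<open>c > 0\<close> by (intro mult_right_mono) auto
    finally have "open_nbhd L (min_ratio * c / D * r) \<subseteq> open_nbhd L (word_ratio u * c)"
      by (rule open_nbhd_mono)
    moreover have "y \<notin> open_nbhd L (word_ratio u * c)" using avoid \<open>v \<in> K\<close> unfolding y_def by blast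
    ultimately show ?thesis by blast
  qed
  ultimately show thesis by (rule that)
qed

lemma hyperplane_diffuse_if_diffuse_section:
  assumes "is_section Lam Sec" and "diffuse_IFS phi Sec K"
  shows "hyperplane_diffuse K"
proof -
  obtain c where "c > 0" and diffuse: "\<And>L. affine_hyperplane L \<Longrightarrow>
      \<exists>w\<in>Sec. word_map phi w ` K \<inter> open_nbhd L c = {}"
    using assms(2) unfolding diffuse_IFS_def by blast
  have "Sec \<subseteq> lists Lam" using assms(1) by (simp add: is_section_def)
  obtain D where "D > 0" and D: "\<And>x y. x \<in> K \<Longrightarrow> y \<in> K \<Longrightarrow> dist x y < D"
    using attractor_dist_less by blast
  define \<beta> where "\<beta> = min_ratio * c / D"
  have "K \<inter> ball x \<xi> - open_nbhd L (\<beta> * \<xi>) \<noteq> {}"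
    if \<xi>: "0 < \<xi>" "\<xi> < D" and x: "x \<in> K" and L: "affine_hyperplane L" for \<xi> x L
  proof -
    obtain y where "y \<in> K" and "dist x y < \<xi>" and "y \<notin> open_nbhd L (\<beta> * \<xi>)"
      using diffuse_section_point_off_nbhd[OF \<open>Sec \<subseteq> lists Lam\<close> \<open>c > 0\<close> diffuse D \<xi>(1)
          less_imp_le[OF \<xi>(2)] x L]
      unfolding \<beta>_def by blast
    then show ?thesis by auto
  qed
  moreover have "\<beta> > 0" using min_ratio_pos \<open>c > 0\<close> \<open>D > 0\<close> by (simp add: \<beta>_def)
  ultimately show ?thesis
    unfolding hyperplane_diffuse_def using compact_imp_closed[OF compact_attractor] \<open>D > 0\<close>
    by (intro conjI exI[of _ \<beta>] exI[of _ D]) auto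
qed

end

theorem theorem3p12:
  fixes Lam :: "'i set" and phi :: "'i \<Rightarrow> 'a::euclidean_space \<Rightarrow> 'a" and K :: "'a set"
  assumes "similarity_IFS Lam phi"
    and "is_attractor Lam phi K"
  shows "((\<nexists>L. affine_hyperplane L \<and> K \<subseteq> L) \<longleftrightarrow> (\<exists>Sec. is_section Lam Sec \<and> diffuse_IFS phi Sec K))
       \<and> ((\<exists>Sec. is_section Lam Sec \<and> diffuse_IFS phi Sec K) \<longleftrightarrow> hyperplane_diffuse K)"
proof -
  interpret similarity_ifs_attractor Lam phi K
    by unfold_locales (rule assms)+
  have "(\<nexists>L. affine_hyperplane L \<and> K \<subseteq> L) \<Longrightarrow> \<exists>Sec. is_section Lam Sec \<and> diffuse_IFS phi Sec K"
    by (rule diffuse_section_if_not_flat)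
  moreover have "\<exists>Sec. is_section Lam Sec \<and> diffuse_IFS phi Sec K \<Longrightarrow> hyperplane_diffuse K"
    using hyperplane_diffuse_if_diffuse_section by blast
  moreover have "hyperplane_diffuse K \<Longrightarrow> \<nexists>L. affine_hyperplane L \<and> K \<subseteq> L"
    using hyperplane_diffuse_not_in_hyperplane attractor_nonempty by blast
  ultimately show ?thesis by blast
qed

end
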